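(* For every precubical set $X$, the stream realization $\vec{|X|}$ is path-ordered.
   Context: Streams: a circulation on a space $X$ assigns to each open $V\subset X$ a preorder $\leqslant_V$ such that for every collection $\mathcal{O}$ of open sets, $\leqslant_{\bigcup\mathcal{O}}$ is the preorder with smallest graph containing $\bigcup_{V\in\mathcal{O}}\mathrm{graph}(\leqslant_V)$; a stream is a space with a circulation; a stream map $f:X\to Y$ is continuous with $f(x)\leqslant_V f(y)$ whenever $x\leqslant_{f^{-1}V}y$. Streams form a cocomplete category, colimits being computed on underlying spaces with the final circulation. $\vec\square[1]$ is $[0,1]$ with circulation $x\leqslant_V y$ iff $x\le y$ and $[x,y]\subset V$; a dipath on $X$ is a stream map $\vec\square[1]\to X$. $X$ is path-ordered if whenever $V\subset X$ is open and $x\leqslant_V y$ there is a dipath from $x$ to $y$ with image in $V$. $\square$ is the smallest subcategory of posets and monotone maps closed under cartesian products (unit $\{0\}$) containing $\delta_\pm:\{0\}\to\{0<1\}$; a precubical set is a functor $X:\square^{op}\to\mathbf{Set}$, $X_n=X([1]^n)$. $\vec\square[n]$ is the $n$-fold product of $\vec\square[1]$ in streams, $\square$-morphisms extend linearly to stream maps, and the stream realization is the coend $\vec{|X|}=\int^{[1]^n}X_n\cdot\vec\square[n]$ in streams. *)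

theory Defs
  imports "HOL-Analysis.Analysis"
begin

type_synonym 'a circ = "'a set \<Rightarrow> ('a \<times> 'a) set"
type_synonym 'a stream = "'a topology \<times> 'a circ"

text \<open>A circulation on the space T: to each open V a preorder on V (given by its graph),
  such that for every collection O of open sets the preorder on the union is the smallest
  preorder (on the union) whose graph contains the union of the graphs.\<close>
definition is_circulation :: "'a topology \<Rightarrow> 'a circ \<Rightarrow> bool" where
  "is_circulation T C \<longleftrightarrow>
     (\<forall>V. openin T V \<longrightarrow> C V \<subseteq> V \<times> V \<and> (\<forall>x\<in>V. (x, x) \<in> C V) \<and> trans (C V)) \<and>
     (\<forall>Os. (\<forall>V\<in>Os. openin T V) \<longrightarrow>
          C (\<Union>Os) = Id_on (\<Union>Os) \<union> (\<Union>V\<in>Os. C V)\<^sup>+)"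

definition is_stream :: "'a stream \<Rightarrow> bool" where
  "is_stream S \<longleftrightarrow> is_circulation (fst S) (snd S)"

definition stream_map :: "'a stream \<Rightarrow> 'b stream \<Rightarrow> ('a \<Rightarrow> 'b) \<Rightarrow> bool" where
  "stream_map S S' f \<longleftrightarrow>
     continuous_map (fst S) (fst S') f \<and>
     (\<forall>V. openin (fst S') V \<longrightarrow>
        (\<forall>x y. (x, y) \<in> snd S (topspace (fst S) \<inter> f -` V) \<longrightarrow> (f x, f y) \<in> snd S' V))"

definition box1 :: "real stream" where
  "box1 = (top_of_set {0..1}, (\<lambda>V. {(x, y). x \<le> y \<and> {x..y} \<subseteq> V}))"

definition path_ordered :: "'a stream \<Rightarrow> bool" where
  "path_ordered S \<longleftrightarrow>
     (\<forall>V x y. openin (fst S) V \<and> (x, y) \<in> snd S V \<longrightarrow>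
        (\<exists>\<gamma>. stream_map box1 S \<gamma> \<and> \<gamma> 0 = x \<and> \<gamma> 1 = y \<and> \<gamma> ` {0..1} \<subseteq> V))"

text \<open>[0,1]^n, represented inside nat => real (coordinates >= n are 0), with the
  product topology.\<close>
definition cube :: "nat \<Rightarrow> (nat \<Rightarrow> real) set" where
  "cube n = {t. (\<forall>i<n. 0 \<le> t i \<and> t i \<le> 1) \<and> (\<forall>i\<ge>n. t i = 0)}"

definition cube_top :: "nat \<Rightarrow> (nat \<Rightarrow> real) topology" where
  "cube_top n = subtopology (powertop_real UNIV) (cube n)"

text \<open>The n-fold product of box1 in streams: the product space carrying the initial
  (i.e. largest) circulation making all coordinate projections stream maps into box1.\<close>
definition boxn :: "nat \<Rightarrow> (nat \<Rightarrow> real) stream" where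
  "boxn n = (cube_top n,
     (\<lambda>V. if openin (cube_top n) V then
            \<Union>{C V | C. is_circulation (cube_top n) C \<and>
                       (\<forall>i<n. stream_map (cube_top n, C) box1 (\<lambda>t. t i))}
          else {}))"

text \<open>[1]^n is represented by boolean lists of length n; a monotone map [1]^m -> [1]^n
  by a function on boolean lists, normalised to be [] outside lists of length m.\<close>
definition norm_fun :: "nat \<Rightarrow> (bool list \<Rightarrow> bool list) \<Rightarrow> bool list \<Rightarrow> bool list" where
  "norm_fun m f = (\<lambda>v. if length v = m then f v else [])"

text \<open>The smallest subcategory of posets closed under cartesian products (unit [1]^0)
  containing delta_minus, delta_plus (and hence the objects [1]^n and their identities).\<close>
inductive cube_mor :: "nat \<Rightarrow> nat \<Rightarrow> (bool list \<Rightarrow> bool list) \<Rightarrow> bool" where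
  unit: "cube_mor 0 0 (norm_fun 0 (\<lambda>v. []))"
| ident: "cube_mor 1 1 (norm_fun 1 id)"
| dminus: "cube_mor 0 1 (norm_fun 0 (\<lambda>v. [False]))"
| dplus: "cube_mor 0 1 (norm_fun 0 (\<lambda>v. [True]))"
| comp: "cube_mor l m f \<Longrightarrow> cube_mor m n g \<Longrightarrow> cube_mor l n (norm_fun l (g \<circ> f))"
| prod: "cube_mor m n f \<Longrightarrow> cube_mor m' n' g \<Longrightarrow>
     cube_mor (m + m') (n + n') (norm_fun (m + m') (\<lambda>v. f (take m v) @ g (drop m v)))"

definition precubical ::
    "(nat \<Rightarrow> 'a set) \<Rightarrow> (nat \<Rightarrow> nat \<Rightarrow> (bool list \<Rightarrow> bool list) \<Rightarrow> 'a \<Rightarrow> 'a) \<Rightarrow> bool" where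
  "precubical X act \<longleftrightarrow>
     (\<forall>m n f x. cube_mor m n f \<and> x \<in> X n \<longrightarrow> act m n f x \<in> X m) \<and>
     (\<forall>n x. x \<in> X n \<longrightarrow> act n n (norm_fun n id) x = x) \<and>
     (\<forall>l m n f g x. cube_mor l m f \<and> cube_mor m n g \<and> x \<in> X n \<longrightarrow>
        act l n (norm_fun l (g \<circ> f)) x = act l m f (act m n g x))"

text \<open>Multilinear extension of a map [1]^m -> [1]^n to [0,1]^m -> [0,1]^n.\<close>
definition lin_ext :: "nat \<Rightarrow> nat \<Rightarrow> (bool list \<Rightarrow> bool list) \<Rightarrow> (nat \<Rightarrow> real) \<Rightarrow> nat \<Rightarrow> real" where
  "lin_ext m n f t = (\<lambda>j. if j < n then
      (\<Sum>v\<in>{v::bool list. length v = m}.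
          (\<Prod>i<m. if v ! i then t i else 1 - t i) * (if f v ! j then 1 else 0))
    else 0)"

definition cells_top :: "(nat \<Rightarrow> 'a set) \<Rightarrow> ((nat \<times> 'a) \<times> (nat \<Rightarrow> real)) topology" where
  "cells_top X = sum_topology (\<lambda>(n, x). cube_top n) {(n, x). x \<in> X n}"

text \<open>The coend identifications (act f x, t) ~ (x, |f| t), as an equivalence relation.\<close>
definition real_gen ::
    "(nat \<Rightarrow> 'a set) \<Rightarrow> (nat \<Rightarrow> nat \<Rightarrow> (bool list \<Rightarrow> bool list) \<Rightarrow> 'a \<Rightarrow> 'a) \<Rightarrow>
     (((nat \<times> 'a) \<times> (nat \<Rightarrow> real)) \<times> ((nat \<times> 'a) \<times> (nat \<Rightarrow> real))) set" where
  "real_gen X act = {(((m, act m n f x), t), ((n, x), lin_ext m n f t)) | m n f x t.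
       cube_mor m n f \<and> x \<in> X n \<and> t \<in> cube m}"

definition real_rel where
  "real_rel X act = Id_on (topspace (cells_top X)) \<union> (real_gen X act \<union> (real_gen X act)\<inverse>)\<^sup>+"

definition real_top ::
    "(nat \<Rightarrow> 'a set) \<Rightarrow> (nat \<Rightarrow> nat \<Rightarrow> (bool list \<Rightarrow> bool list) \<Rightarrow> 'a \<Rightarrow> 'a) \<Rightarrow>
     ((nat \<times> 'a) \<times> (nat \<Rightarrow> real)) set topology" where
  "real_top X act = topology (\<lambda>U.
      U \<subseteq> topspace (cells_top X) // real_rel X act \<and>
      openin (cells_top X) {p \<in> topspace (cells_top X). real_rel X act `` {p} \<in> U})"

definition char_map where
  "char_map X act n x = (\<lambda>t. real_rel X act `` {((n, x), t)})"

text \<open>Stream realization: quotient space with the final (smallest) circulation making all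
  characteristic maps from the directed cubes stream maps.\<close>
definition stream_realization ::
    "(nat \<Rightarrow> 'a set) \<Rightarrow> (nat \<Rightarrow> nat \<Rightarrow> (bool list \<Rightarrow> bool list) \<Rightarrow> 'a \<Rightarrow> 'a) \<Rightarrow>
     ((nat \<times> 'a) \<times> (nat \<Rightarrow> real)) set stream" where
  "stream_realization X act = (real_top X act,
     (\<lambda>V. if openin (real_top X act) V then
            \<Inter>{C V | C. is_circulation (real_top X act) C \<and>
                 (\<forall>n x. x \<in> X n \<longrightarrow> stream_map (boxn n) (real_top X act, C) (char_map X act n x))}
          else {}))"

end

theory Submission
  imports Defs
begin

text \<open>A family S of paths closed under restriction to subintervals generates
  a circulation: on an open set V it is the reflexive-transitive closure of the endpoint pairs
  (p 0, p 1) of the paths p in S running inside V; the union axiom holds by a Lebesgue-number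
  subdivision of paths.  Two such families matter: the monotone straight segments of the cube
  [0,1]^n, and their images under the characteristic maps of the cells ("cell segments").
  For the first family the coordinate projections are stream maps, so its circulation lies
  below that of the directed cube, and monotone segments are dipaths of the directed cube.
  Admissible circulations of the cube relate only coordinatewise ordered points, so, using
  segment-convex neighbourhoods and locality, the characteristic maps are stream maps for the
  circulation generated by cell segments; being final, the circulation of the realization lies
  below it.  Conversely every cell segment is a dipath of the realization (a monotone segment
  followed by a characteristic map).  Hence related points are joined by a finite chain of
  dipaths inside V, and their concatenation is the required dipath.\<close>

section \<open>Circulations generated by families of paths\<close>

definition path_steps :: "(real \<Rightarrow> 'b) set \<Rightarrow> 'b set \<Rightarrow> ('b \<times> 'b) set" where
  "path_steps S V = {(p 0, p 1) | p. p \<in> S \<and> p ` {0..1} \<subseteq> V}"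

definition path_circ :: "(real \<Rightarrow> 'b) set \<Rightarrow> 'b circ" where
  "path_circ S V = Id_on V \<union> (path_steps S V)\<^sup>+"

definition restriction_closed :: "(real \<Rightarrow> 'b) set \<Rightarrow> bool" where
  "restriction_closed S \<longleftrightarrow>
     (\<forall>p\<in>S. \<forall>a b. 0 \<le> a \<and> a \<le> b \<and> b \<le> 1 \<longrightarrow> (\<lambda>r. p (a + r * (b - a))) \<in> S)"

lemma path_steps_subset: "path_steps S V \<subseteq> V \<times> V"
  unfolding path_steps_def by force

lemma path_steps_mono: "V \<subseteq> W \<Longrightarrow> path_steps S V \<subseteq> path_steps S W"
  unfolding path_steps_def by blast

lemma path_steps_into_circ: "path_steps S V \<subseteq> path_circ S V"
  unfolding path_circ_def by auto

lemma path_circ_refl: "x \<in> V \<Longrightarrow> (x, x) \<in> path_circ S V"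
  unfolding path_circ_def by blast

lemma path_circ_mono: "V \<subseteq> W \<Longrightarrow> path_circ S V \<subseteq> path_circ S W"
  unfolding path_circ_def using path_steps_mono[of V W S] trancl_mono by blast

lemma path_circ_subset: "path_circ S V \<subseteq> V \<times> V"
  unfolding path_circ_def using trancl_subset_Sigma[OF path_steps_subset] by auto

lemma path_circ_trans: "trans (path_circ S V)"
  using trancl_subset_Sigma[OF path_steps_subset[of S V]]
  unfolding trans_def path_circ_def by (auto intro: trancl_trans)

lemma path_circ_le:
  assumes "trans Rel" "Id_on V \<subseteq> Rel" "path_steps S V \<subseteq> Rel"
  shows "path_circ S V \<subseteq> Rel"
proof -
  have "(path_steps S V)\<^sup>+ \<subseteq> Rel\<^sup>+" using assms(3) by (rule trancl_mono_subset)
  also have "\<dots> = Rel" by (rule trancl_id[OF assms(1)])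
  finally show ?thesis unfolding path_circ_def using assms(2) by blast
qed

text \<open>Lebesgue-number argument: a path covered by open sets can be cut into N pieces of
  equal length, each running inside one of the sets.\<close>
lemma path_subdivision:
  fixes T :: "'b topology" and p :: "real \<Rightarrow> 'b"
  assumes cont: "continuous_map (top_of_set {0..1}) T p"
    and opn: "\<And>W. W \<in> Os \<Longrightarrow> openin T W"
    and cov: "p ` {0..1} \<subseteq> \<Union>Os"
  shows "\<exists>N::nat. N > 0 \<and> (\<forall>k<N. \<exists>W\<in>Os. p ` {real k / N .. real (Suc k) / N} \<subseteq> W)"
proof -
  define G where "G = {U. open U \<and> (\<exists>W\<in>Os. {0..1} \<inter> U = {r\<in>{0..1}. p r \<in> W})}"
  have "{0..1::real} \<subseteq> \<Union>G"
  proof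
    fix r :: real assume r: "r \<in> {0..1}"
    then obtain W where W: "W \<in> Os" "p r \<in> W" using cov by blast
    have "openin (top_of_set {0..1}) {x \<in> {0..1}. p x \<in> W}"
      using openin_continuous_map_preimage[OF cont opn[OF W(1)]] by simp
    then obtain U where "open U" "{x \<in> {0..1}. p x \<in> W} = {0..1} \<inter> U"
      by (auto simp: openin_open)
    then show "r \<in> \<Union>G" using W r unfolding G_def by blast
  qed
  moreover have "\<And>U. U \<in> G \<Longrightarrow> open U" unfolding G_def by blast
  ultimately obtain e where e: "0 < e" "\<And>x. x \<in> {0..1} \<Longrightarrow> \<exists>U\<in>G. ball x e \<subseteq> U"
    using Heine_Borel_lemma[OF compact_Icc] by metis
  obtain N :: nat where N: "1 / e < N" using reals_Archimedean2 by blast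
  moreover have "0 < 1 / e" using e(1) by simp
  ultimately have "0 < real N" by linarith
  then have Npos: "N > 0" by simp
  have short: "1 / real N < e" using N e(1) Npos by (simp add: divide_less_eq mult.commute)
  have "\<exists>W\<in>Os. p ` {real k / N .. real (Suc k) / N} \<subseteq> W" if k: "k < N" for k
  proof -
    let ?a = "real k / N" and ?b = "real (Suc k) / N"
    obtain U where U: "U \<in> G" "ball ?a e \<subseteq> U" using e(2)[of ?a] k by auto
    then obtain W where W: "W \<in> Os" "{0..1} \<inter> U = {r\<in>{0..1}. p r \<in> W}" unfolding G_def by blast
    have ab: "0 \<le> ?a" "?b \<le> 1" using k by auto
    have "r \<in> {0..1} \<inter> U" if r: "r \<in> {?a..?b}" for r
    proof -
      have "dist ?a r \<le> 1 / N" using r by (simp add: dist_real_def add_divide_distrib)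
      then have "r \<in> ball ?a e" using short by (simp add: mem_ball)
      moreover have "r \<in> {0..1}" using r ab(2) order_trans[OF ab(1), of r] by auto
      ultimately show ?thesis using U(2) by auto
    qed
    then have "p ` {?a..?b} \<subseteq> W" using W(2) by blast
    then show ?thesis using W(1) by blast
  qed
  then show ?thesis using Npos by blast
qed

lemma restriction_closedD:
  "restriction_closed S \<Longrightarrow> p \<in> S \<Longrightarrow> 0 \<le> a \<Longrightarrow> a \<le> b \<Longrightarrow> b \<le> 1 \<Longrightarrow>
     (\<lambda>r. p (a + r * (b - a))) \<in> S"
  unfolding restriction_closed_def by blast

lemma affine_param_in_interval:
  fixes a b r :: real
  assumes "a \<le> b" "r \<in> {0..1}"
  shows "a + r * (b - a) \<in> {a..b}"
proof -
  have "r * (b - a) \<le> b - a" using assms by (simp add: mult_left_le_one_le)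
  moreover have "0 \<le> r * (b - a)" using assms by simp
  ultimately show ?thesis by simp
qed

lemma path_steps_chain:
  fixes T :: "'b topology"
  assumes cont: "\<And>p. p \<in> S \<Longrightarrow> continuous_map (top_of_set {0..1}) T p"
    and restr: "restriction_closed S"
    and pS: "p \<in> S"
    and opn: "\<And>W. W \<in> Os \<Longrightarrow> openin T W"
    and cov: "p ` {0..1} \<subseteq> \<Union>Os"
  shows "(p 0, p 1) \<in> (\<Union>W\<in>Os. path_steps S W)\<^sup>+"
proof -
  let ?R = "\<Union>W\<in>Os. path_steps S W"
  obtain N :: nat where N: "N > 0" "\<forall>k<N. \<exists>W\<in>Os. p ` {real k / N .. real (Suc k) / N} \<subseteq> W"
    using path_subdivision[OF cont[OF pS] opn cov] by blast
  have step: "(p (real k / N), p (real (Suc k) / N)) \<in> ?R" if k: "k < N" for k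
  proof -
    define a b where "a = real k / N" and "b = real (Suc k) / N"
    define q where "q = (\<lambda>r. p (a + r * (b - a)))"
    obtain W where W: "W \<in> Os" "p ` {a..b} \<subseteq> W" using N(2) k unfolding a_def b_def by blast
    have ab: "0 \<le> a" "a \<le> b" "b \<le> 1" using k unfolding a_def b_def by (auto simp: divide_right_mono)
    have "q \<in> S" unfolding q_def using restriction_closedD[OF restr pS ab] .
    moreover have "q ` {0..1} \<subseteq> W" unfolding q_def using W(2) affine_param_in_interval[OF ab(2)] by blast
    ultimately have "(q 0, q 1) \<in> path_steps S W" unfolding path_steps_def by blast
    then show ?thesis using W(1) unfolding q_def a_def b_def by auto
  qed
  have chain: "(p 0, p (real (Suc k) / N)) \<in> ?R\<^sup>+" if "Suc k \<le> N" for k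
    using that
  proof (induction k)
    case 0
    then show ?case using step[of 0] by auto
  next
    case (Suc k)
    have "Suc k < N" using Suc.prems by simp
    then have "(p 0, p (real (Suc k) / N)) \<in> ?R\<^sup>+"
      and "(p (real (Suc k) / N), p (real (Suc (Suc k)) / N)) \<in> ?R"
      using Suc.IH step[of "Suc k"] by simp_all
    then show ?case by (rule trancl_into_trancl)
  qed
  obtain k where "N = Suc k" using N(1) gr0_implies_Suc by blast
  with chain[of k] show ?thesis using N(1) by simp
qed

theorem path_circ_is_circulation:
  fixes T :: "'b topology"
  assumes cont: "\<And>p. p \<in> S \<Longrightarrow> continuous_map (top_of_set {0..1}) T p"
    and restr: "restriction_closed S"
  shows "is_circulation T (path_circ S)"
proof -
  have union: "path_circ S (\<Union>Os) = Id_on (\<Union>Os) \<union> (\<Union>V\<in>Os. path_circ S V)\<^sup>+"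
    if opn: "\<forall>V\<in>Os. openin T V" for Os
  proof
    let ?R = "\<Union>V\<in>Os. path_circ S V"
    have "?R \<subseteq> path_circ S (\<Union>Os)" using path_circ_mono[of _ "\<Union>Os" S] by blast
    then have "?R\<^sup>+ \<subseteq> (path_circ S (\<Union>Os))\<^sup>+" by (rule trancl_mono_subset)
    also have "\<dots> = path_circ S (\<Union>Os)" by (rule trancl_id[OF path_circ_trans])
    finally show "Id_on (\<Union>Os) \<union> ?R\<^sup>+ \<subseteq> path_circ S (\<Union>Os)"
      using path_circ_refl[of _ "\<Union>Os" S] by blast
  next
    let ?R = "\<Union>V\<in>Os. path_circ S V"
    have "path_steps S (\<Union>Os) \<subseteq> ?R\<^sup>+"
    proof
      fix z assume "z \<in> path_steps S (\<Union>Os)"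
      then obtain p where p: "z = (p 0, p 1)" "p \<in> S" "p ` {0..1} \<subseteq> \<Union>Os"
        unfolding path_steps_def by blast
      have "(p 0, p 1) \<in> (\<Union>W\<in>Os. path_steps S W)\<^sup>+"
        using path_steps_chain[OF cont restr p(2) _ p(3)] opn by blast
      moreover have "(\<Union>W\<in>Os. path_steps S W) \<subseteq> ?R" using path_steps_into_circ by blast
      ultimately show "z \<in> ?R\<^sup>+" unfolding p(1) by (rule trancl_mono)
    qed
    then have "(path_steps S (\<Union>Os))\<^sup>+ \<subseteq> (?R\<^sup>+)\<^sup>+" by (rule trancl_mono_subset)
    then show "path_circ S (\<Union>Os) \<subseteq> Id_on (\<Union>Os) \<union> ?R\<^sup>+"
      unfolding path_circ_def[of S "\<Union>Os"] by auto
  qed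
  show ?thesis
    unfolding is_circulation_def
    by (simp add: path_circ_subset path_circ_refl path_circ_trans union)
qed

section \<open>General facts about circulations\<close>

lemma circulation_preorder:
  assumes "is_circulation T C" "openin T V"
  shows "C V \<subseteq> V \<times> V" "x \<in> V \<Longrightarrow> (x, x) \<in> C V" "trans (C V)"
  using assms unfolding is_circulation_def by blast+

lemma circulation_union:
  assumes "is_circulation T C" "\<forall>V\<in>Os. openin T V"
  shows "C (\<Union>Os) = Id_on (\<Union>Os) \<union> (\<Union>V\<in>Os. C V)\<^sup>+"
  using assms unfolding is_circulation_def by blast

text \<open>A circulation is monotone: apply the union axiom to {B, A} with B \<subseteq> A.\<close>
lemma circulation_mono:
  assumes C: "is_circulation T C" and A: "openin T A" and B: "openin T B" and BA: "B \<subseteq> A"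
  shows "C B \<subseteq> C A"
proof -
  have "C (\<Union>{B, A}) = Id_on (\<Union>{B, A}) \<union> (\<Union>V\<in>{B, A}. C V)\<^sup>+"
    using A B by (intro circulation_union[OF C]) simp
  moreover have "\<Union>{B, A} = A" using BA by blast
  ultimately have eq: "C A = Id_on A \<union> (C B \<union> C A)\<^sup>+" by simp
  have "C B \<subseteq> (C B \<union> C A)\<^sup>+" by (auto intro: r_into_trancl)
  then show ?thesis by (subst eq) blast
qed

lemma circulation_local_bound:
  assumes C: "is_circulation T C"
    and cover: "\<forall>B\<in>Os. openin T B" "\<Union>Os = P"
    and tr: "trans Rel" and refl: "Id_on P \<subseteq> Rel"
    and local: "\<And>B. B \<in> Os \<Longrightarrow> C B \<subseteq> Rel"
  shows "C P \<subseteq> Rel"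
proof -
  have eq: "C P = Id_on P \<union> (\<Union>B\<in>Os. C B)\<^sup>+"
    using circulation_union[OF C cover(1)] cover(2) by simp
  have "(\<Union>B\<in>Os. C B)\<^sup>+ \<subseteq> Rel\<^sup>+" using local by (intro trancl_mono_subset) blast
  also have "Rel\<^sup>+ = Rel" by (rule trancl_id[OF tr])
  finally show ?thesis unfolding eq by (rule Un_least[OF refl])
qed

lemma Inter_circulations_refl:
  assumes circ: "\<And>C. Q C \<Longrightarrow> is_circulation T C" and W: "openin T W" "w \<in> W"
  shows "(w, w) \<in> \<Inter>{C W | C. Q C}"
proof (rule InterI)
  fix Z assume "Z \<in> {C W | C. Q C}"
  then obtain C where "Z = C W" "Q C" by blast
  then show "(w, w) \<in> Z" using circulation_preorder(2)[OF circ W] by simp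
qed

lemma Inter_circulations_trans:
  assumes circ: "\<And>C. Q C \<Longrightarrow> is_circulation T C" and W: "openin T W"
  shows "trans (\<Inter>{C W | C. Q C})"
proof (rule transI, rule InterI)
  fix x y z Z
  assume xy: "(x, y) \<in> \<Inter>{C W | C. Q C}" and yz: "(y, z) \<in> \<Inter>{C W | C. Q C}"
    and "Z \<in> {C W | C. Q C}"
  then obtain C where C: "Z = C W" "Q C" by blast
  then have "(x, y) \<in> C W" "(y, z) \<in> C W" using xy yz by blast+
  then show "(x, z) \<in> Z" using circulation_preorder(3)[OF circ[OF C(2)] W] C(1)
    by (blast dest: transD)
qed

section \<open>Stream maps and dipaths\<close>

lemma stream_map_relD:
  "stream_map S S' f \<Longrightarrow> openin (fst S') V \<Longrightarrow> (x, y) \<in> snd S (topspace (fst S) \<inter> f -` V) \<Longrightarrow>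
     (f x, f y) \<in> snd S' V"
  unfolding stream_map_def by blast

lemma stream_map_box1_iff:
  "stream_map box1 S g \<longleftrightarrow>
     continuous_map (top_of_set {0..1}) (fst S) g \<and>
     (\<forall>W a b. openin (fst S) W \<and> a \<le> b \<and> {a..b} \<subseteq> {0..1} \<inter> g -` W \<longrightarrow> (g a, g b) \<in> snd S W)"
  unfolding stream_map_def box1_def by auto

lemma stream_map_compose:
  assumes f: "stream_map S1 S2 f" and g: "stream_map S2 S3 g"
  shows "stream_map S1 S3 (g \<circ> f)"
  unfolding stream_map_def
proof (intro conjI allI impI)
  have cf: "continuous_map (fst S1) (fst S2) f" and cg: "continuous_map (fst S2) (fst S3) g"
    using f g unfolding stream_map_def by blast+
  then show "continuous_map (fst S1) (fst S3) (g \<circ> f)" by (rule continuous_map_compose)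
  fix V x y
  assume V: "openin (fst S3) V" and xy: "(x, y) \<in> snd S1 (topspace (fst S1) \<inter> (g \<circ> f) -` V)"
  define U where "U = topspace (fst S2) \<inter> g -` V"
  have "openin (fst S2) {u \<in> topspace (fst S2). g u \<in> V}"
    using openin_continuous_map_preimage[OF cg V] .
  moreover have "{u \<in> topspace (fst S2). g u \<in> V} = U" unfolding U_def by auto
  ultimately have U: "openin (fst S2) U" by simp
  have "topspace (fst S1) \<inter> f -` U = topspace (fst S1) \<inter> (g \<circ> f) -` V"
    unfolding U_def using continuous_map_image_subset_topspace[OF cf] by auto
  then have "(f x, f y) \<in> snd S2 U" using stream_map_relD[OF f U] xy by simp
  then have "(g (f x), g (f y)) \<in> snd S3 V" using stream_map_relD[OF g V] unfolding U_def by simp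
  then show "((g \<circ> f) x, (g \<circ> f) y) \<in> snd S3 V" by simp
qed

definition dipath_joins :: "'b stream \<Rightarrow> 'b \<Rightarrow> 'b \<Rightarrow> 'b set \<Rightarrow> bool" where
  "dipath_joins S x y V \<longleftrightarrow> (\<exists>\<gamma>. stream_map box1 S \<gamma> \<and> \<gamma> 0 = x \<and> \<gamma> 1 = y \<and> \<gamma> ` {0..1} \<subseteq> V)"

lemma path_ordered_iff:
  "path_ordered S \<longleftrightarrow>
     (\<forall>V x y. openin (fst S) V \<and> (x, y) \<in> snd S V \<longrightarrow> dipath_joins S x y V)"
  unfolding path_ordered_def dipath_joins_def ..

lemma dipath_joins_refl:
  assumes refl: "\<And>W w. openin T W \<Longrightarrow> w \<in> W \<Longrightarrow> (w, w) \<in> R W"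
    and x: "x \<in> topspace T" "x \<in> V"
  shows "dipath_joins (T, R) x x V"
proof -
  have "stream_map box1 (T, R) (\<lambda>_. x)"
    unfolding stream_map_box1_iff fst_conv snd_conv using x(1) refl by force
  then show ?thesis unfolding dipath_joins_def using x(2) by auto
qed

lemma dipath_on_piece:
  assumes h: "stream_map box1 (T, R) h" and W: "openin T W"
    and cd: "c < d" and ab: "c \<le> a" "a \<le> b" "b \<le> d"
    and g: "\<And>r. r \<in> {c..d} \<Longrightarrow> g r = h ((r - c) / (d - c))"
    and sub: "{a..b} \<subseteq> g -` W"
  shows "(g a, g b) \<in> R W"
proof -
  define \<phi> where "\<phi> r = (r - c) / (d - c)" for r
  have "s \<in> {0..1} \<inter> h -` W" if s: "s \<in> {\<phi> a..\<phi> b}" for s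
  proof -
    define r where "r = c + s * (d - c)"
    have "\<phi> r = s" unfolding \<phi>_def r_def using cd by simp
    moreover have "r \<in> {a..b}"
      using s cd unfolding r_def \<phi>_def by (auto simp: field_simps)
    moreover have "\<phi> a \<ge> 0" "\<phi> b \<le> 1" unfolding \<phi>_def using ab cd by auto
    ultimately show ?thesis using s sub g[of r] ab unfolding \<phi>_def by auto
  qed
  moreover have "\<phi> a \<le> \<phi> b" unfolding \<phi>_def using ab cd by (simp add: divide_right_mono)
  ultimately have "(h (\<phi> a), h (\<phi> b)) \<in> R W" using h W unfolding stream_map_box1_iff fst_conv snd_conv by blast
  then show ?thesis using g ab unfolding \<phi>_def by simp
qed

definition concat_path :: "(real \<Rightarrow> 'b) \<Rightarrow> (real \<Rightarrow> 'b) \<Rightarrow> real \<Rightarrow> 'b" where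
  "concat_path g1 g2 r = (if r \<le> 1/2 then g1 (2 * r) else g2 (2 * r - 1))"

lemma concat_path_first: "r \<le> 1/2 \<Longrightarrow> concat_path g1 g2 r = g1 (2 * r)"
  unfolding concat_path_def by simp

lemma concat_path_second:
  assumes "g1 1 = g2 0" "1/2 \<le> r"
  shows "concat_path g1 g2 r = g2 (2 * r - 1)"
proof (cases "r = 1/2")
  case True
  then have "2 * r = 1" "2 * r - 1 = 0" by simp_all
  then show ?thesis using assms(1) unfolding concat_path_def by simp
next
  case False
  then show ?thesis using assms(2) unfolding concat_path_def by simp
qed

lemma concat_path_continuous:
  assumes g1: "continuous_map (top_of_set {0..1}) T g1"
    and g2: "continuous_map (top_of_set {0..1}) T g2" and glue: "g1 1 = g2 0"
  shows "continuous_map (top_of_set {0..1}) T (concat_path g1 g2)"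
  unfolding concat_path_def
proof (rule continuous_map_cases_le[where p="\<lambda>r. r" and q="\<lambda>r. 1/2"])
  have "continuous_map (subtopology (top_of_set {0..1}) {r \<in> {0..1}. r \<le> 1/2})
          (top_of_set {0..1}) (\<lambda>r::real. 2 * r)"
    unfolding subtopology_subtopology continuous_map_subtopology_eu
    by (auto intro!: continuous_intros)
  then show "continuous_map (subtopology (top_of_set {0..1})
      {r \<in> topspace (top_of_set {0..1}). r \<le> 1/2}) T (\<lambda>r. g1 (2 * r))"
    using continuous_map_compose[OF _ g1] unfolding o_def by simp
  have "continuous_map (subtopology (top_of_set {0..1}) {r \<in> {0..1}. 1/2 \<le> r})
          (top_of_set {0..1}) (\<lambda>r::real. 2 * r - 1)"
    unfolding subtopology_subtopology continuous_map_subtopology_eu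
    by (auto intro!: continuous_intros)
  then show "continuous_map (subtopology (top_of_set {0..1})
      {r \<in> topspace (top_of_set {0..1}). 1/2 \<le> r}) T (\<lambda>r. g2 (2 * r - 1))"
    using continuous_map_compose[OF _ g2] unfolding o_def by simp
next
  fix r :: real assume r: "r = 1/2"
  show "g1 (2 * r) = g2 (2 * r - 1)" unfolding r using glue by simp
qed auto

lemma concat_path_image:
  assumes "g1 1 = g2 0"
  shows "concat_path g1 g2 ` {0..1} \<subseteq> g1 ` {0..1} \<union> g2 ` {0..1}"
proof
  fix v assume "v \<in> concat_path g1 g2 ` {0..1}"
  then obtain r where r: "r \<in> {0..1}" "v = concat_path g1 g2 r" by blast
  show "v \<in> g1 ` {0..1} \<union> g2 ` {0..1}"
  proof (cases "r \<le> 1/2")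
    case True
    then have "2 * r \<in> {0..1}" using r by simp
    then show ?thesis using r(2) concat_path_first[OF True] by blast
  next
    case False
    then have "2 * r - 1 \<in> {0..1}" using r by simp
    then show ?thesis using r(2) concat_path_second[of g1 g2 r, OF assms] False by auto
  qed
qed

text \<open>The concatenation of two dipaths is a dipath when the relations are transitive: an
  interval straddling the midpoint is split there, and each half is handled by
  dipath_on_piece.\<close>
lemma concat_path_dipath:
  assumes g1: "stream_map box1 (T, R) g1" and g2: "stream_map box1 (T, R) g2"
    and glue: "g1 1 = g2 0" and tr: "\<And>W. openin T W \<Longrightarrow> trans (R W)"
  shows "stream_map box1 (T, R) (concat_path g1 g2)"
proof -
  let ?g = "concat_path g1 g2"
  have "(?g a, ?g b) \<in> R W"
    if W: "openin T W" and ab: "a \<le> b" "{a..b} \<subseteq> {0..1} \<inter> ?g -` W" for W a b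
  proof -
    have a0: "0 \<le> a" and b1: "b \<le> 1" using ab by auto
    have g_lo: "?g r = g1 ((r - 0) / (1/2 - 0))" if "r \<in> {0..1/2}" for r
      using concat_path_first[of r g1 g2] that by (simp add: mult.commute)
    have g_hi: "?g r = g2 ((r - 1/2) / (1 - 1/2))" if "r \<in> {1/2..1}" for r
    proof -
      have arg: "(r - 1/2) / (1 - 1/2) = 2 * r - 1" by (simp add: field_simps)
      show ?thesis unfolding arg by (rule concat_path_second[of g1 g2, OF glue]) (use that in simp)
    qed
    have sub: "{a'..b'} \<subseteq> ?g -` W" if "{a'..b'} \<subseteq> {a..b}" for a' b'
      using that ab(2) by blast
    have low: "(?g a', ?g b') \<in> R W"
      if "0 \<le> a'" "a' \<le> b'" "b' \<le> 1/2" "{a'..b'} \<subseteq> {a..b}" for a' b'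
      using dipath_on_piece[OF g1 W _ that(1-3) g_lo sub[OF that(4)]] by simp
    have high: "(?g a', ?g b') \<in> R W"
      if "1/2 \<le> a'" "a' \<le> b'" "b' \<le> 1" "{a'..b'} \<subseteq> {a..b}" for a' b'
      using dipath_on_piece[OF g2 W _ that(1-3) g_hi sub[OF that(4)]] by simp
    consider "b \<le> 1/2" | "1/2 \<le> a" | "a < 1/2" "1/2 < b" by linarith
    then show ?thesis
    proof cases
      case 1
      then show ?thesis using low[of a b] ab(1) a0 by simp
    next
      case 2
      then show ?thesis using high[of a b] ab(1) b1 by simp
    next
      case 3
      then have "(?g a, ?g (1/2)) \<in> R W" "(?g (1/2), ?g b) \<in> R W"
        using low[of a "1/2"] high[of "1/2" b] a0 b1 by auto
      then show ?thesis using tr[OF W] by (blast dest: transD)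
    qed
  qed
  moreover have "continuous_map (top_of_set {0..1}) T g1" "continuous_map (top_of_set {0..1}) T g2"
    using g1 g2 unfolding stream_map_box1_iff fst_conv by blast+
  then have "continuous_map (top_of_set {0..1}) T ?g" using concat_path_continuous glue by blast
  ultimately show ?thesis unfolding stream_map_box1_iff fst_conv snd_conv by blast
qed

lemma dipath_joins_trans:
  assumes tr: "\<And>W. openin T W \<Longrightarrow> trans (R W)"
    and xy: "dipath_joins (T, R) x y V" and yz: "dipath_joins (T, R) y z V"
  shows "dipath_joins (T, R) x z V"
proof -
  obtain g1 where g1: "stream_map box1 (T, R) g1" "g1 0 = x" "g1 1 = y" "g1 ` {0..1} \<subseteq> V"
    using xy unfolding dipath_joins_def by blast
  obtain g2 where g2: "stream_map box1 (T, R) g2" "g2 0 = y" "g2 1 = z" "g2 ` {0..1} \<subseteq> V"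
    using yz unfolding dipath_joins_def by blast
  have glue: "g1 1 = g2 0" using g1(3) g2(2) by simp
  have "stream_map box1 (T, R) (concat_path g1 g2)" using concat_path_dipath[OF g1(1) g2(1) glue tr] .
  moreover have "concat_path g1 g2 ` {0..1} \<subseteq> V" using concat_path_image[of g1 g2, OF glue] g1(4) g2(4) by blast
  moreover have "concat_path g1 g2 0 = x" "concat_path g1 g2 1 = z"
    using concat_path_first[of 0 g1 g2] concat_path_second[of g1 g2 1, OF glue] g1(2) g2(3) by simp_all
  ultimately show ?thesis unfolding dipath_joins_def by blast
qed

lemma path_circ_dipath_joins:
  assumes dipaths: "\<And>p. p \<in> S \<Longrightarrow> stream_map box1 (T, R) p"
    and refl: "\<And>W w. openin T W \<Longrightarrow> w \<in> W \<Longrightarrow> (w, w) \<in> R W"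
    and tr: "\<And>W. openin T W \<Longrightarrow> trans (R W)"
    and V: "openin T V" and xy: "(x, y) \<in> path_circ S V"
  shows "dipath_joins (T, R) x y V"
proof -
  have single: "dipath_joins (T, R) u v V" if uv: "(u, v) \<in> path_steps S V" for u v
  proof -
    obtain p where "p \<in> S" "p ` {0..1} \<subseteq> V" "u = p 0" "v = p 1"
      using uv unfolding path_steps_def by blast
    then show ?thesis unfolding dipath_joins_def using dipaths by blast
  qed
  consider "x = y" "x \<in> V" | "(x, y) \<in> (path_steps S V)\<^sup>+"
    using xy unfolding path_circ_def by blast
  then show ?thesis
  proof cases
    case 1
    have "x \<in> topspace T" using 1(2) openin_subset[OF V] by blast
    from dipath_joins_refl[OF refl this 1(2)] show ?thesis using 1(1) by simp
  next
    case 2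
    then show ?thesis
    proof (induction rule: trancl_induct)
      case (base y)
      then show ?case by (rule single)
    next
      case (step y z)
      show ?case using dipath_joins_trans[OF tr step.IH single[OF step.hyps(2)]] .
    qed
  qed
qed

section \<open>Directed cubes\<close>

lemma convex_affine_param:
  fixes x y r :: real
  assumes "convex S" "x \<in> S" "y \<in> S" "0 \<le> r" "r \<le> 1"
  shows "x + r * (y - x) \<in> S"
proof -
  have "(1 - r) *\<^sub>R x + r *\<^sub>R y \<in> S" using convexD_alt[OF assms] .
  moreover have "(1 - r) *\<^sub>R x + r *\<^sub>R y = x + r * (y - x)" by (simp add: algebra_simps)
  ultimately show ?thesis by simp
qed

definition segment :: "(nat \<Rightarrow> real) \<Rightarrow> (nat \<Rightarrow> real) \<Rightarrow> real \<Rightarrow> nat \<Rightarrow> real" where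
  "segment u w r = (\<lambda>i. u i + r * (w i - u i))"

definition monotone_segments :: "nat \<Rightarrow> (real \<Rightarrow> nat \<Rightarrow> real) set" where
  "monotone_segments n =
     {segment u w | u w. u \<in> cube n \<and> w \<in> cube n \<and> (\<forall>i<n. u i \<le> w i)}"

lemma topspace_cube_top [simp]: "topspace (cube_top n) = cube n"
  unfolding cube_top_def by simp

lemma segment_0 [simp]: "segment u w 0 = u" and segment_1 [simp]: "segment u w 1 = w"
  unfolding segment_def by auto

lemma segment_in_cube:
  assumes "u \<in> cube n" "w \<in> cube n" "0 \<le> r" "r \<le> 1"
  shows "segment u w r \<in> cube n"
  using assms convex_affine_param[of "{0..1}" "u i" "w i" r for i]
  unfolding cube_def segment_def by auto

lemma segment_restrict: "segment u w (a + r * (b - a)) = segment (segment u w a) (segment u w b) r"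
  unfolding segment_def by (rule ext) (simp add: algebra_simps)

lemma segment_mono: "u i \<le> w i \<Longrightarrow> a \<le> b \<Longrightarrow> segment u w a i \<le> segment u w b i"
  unfolding segment_def by (simp add: mult_right_mono)

lemma segment_continuous:
  assumes "u \<in> cube n" "w \<in> cube n"
  shows "continuous_map (top_of_set {0..1}) (cube_top n) (segment u w)"
  unfolding cube_top_def continuous_map_in_subtopology
proof
  show "continuous_map (top_of_set {0..1}) (powertop_real UNIV) (segment u w)"
    unfolding continuous_map_componentwise_UNIV segment_def by (simp add: continuous_intros)
  show "segment u w \<in> topspace (top_of_set {0..1}) \<rightarrow> cube n"
    using segment_in_cube[OF assms] by auto
qed

lemma monotone_segment_restrict:
  assumes "u \<in> cube n" "w \<in> cube n" "\<forall>i<n. u i \<le> w i" "0 \<le> a" "a \<le> b" "b \<le> 1"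
  shows "(\<lambda>r. segment u w (a + r * (b - a))) \<in> monotone_segments n"
proof -
  have "segment u w a \<in> cube n" "segment u w b \<in> cube n"
    using segment_in_cube[OF assms(1,2)] assms(4-6) by auto
  moreover have "\<forall>i<n. segment u w a i \<le> segment u w b i"
    using segment_mono assms(3,5) by blast
  ultimately show ?thesis unfolding monotone_segments_def segment_restrict by blast
qed

lemma monotone_segments_restriction_closed: "restriction_closed (monotone_segments n)"
  unfolding restriction_closed_def monotone_segments_def
  using monotone_segment_restrict[unfolded monotone_segments_def] by blast

lemma cube_path_circulation: "is_circulation (cube_top n) (path_circ (monotone_segments n))"
proof (rule path_circ_is_circulation[OF _ monotone_segments_restriction_closed])
  show "continuous_map (top_of_set {0..1}) (cube_top n) p" if "p \<in> monotone_segments n" for p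
    using that segment_continuous unfolding monotone_segments_def by blast
qed

lemma segment_covers_interval:
  assumes "u i \<le> w i" "s \<in> {u i..w i}"
  shows "\<exists>r\<in>{0..1}. segment u w r i = s"
proof (cases "u i = w i")
  case True
  then show ?thesis using assms by (intro bexI[of _ 0]) auto
next
  case False
  then have pos: "w i - u i > 0" using assms(1) by simp
  define r where "r = (s - u i) / (w i - u i)"
  have "r \<in> {0..1}" unfolding r_def using assms(2) pos by (auto simp: divide_le_eq)
  moreover have "segment u w r i = s" unfolding segment_def r_def using pos by simp
  ultimately show ?thesis by blast
qed

lemma projection_stream_map:
  assumes i: "i < n"
  shows "stream_map (cube_top n, path_circ (monotone_segments n)) box1 (\<lambda>t. t i)"
  unfolding stream_map_def fst_conv snd_conv box1_def
proof (intro conjI allI impI)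
  show "continuous_map (cube_top n) (top_of_set {0..1}) (\<lambda>t. t i)"
    unfolding continuous_map_in_subtopology
  proof
    show "continuous_map (cube_top n) euclideanreal (\<lambda>t. t i)"
      unfolding cube_top_def
      by (rule continuous_map_from_subtopology[OF continuous_map_product_projection]) simp
    show "(\<lambda>t. t i) \<in> topspace (cube_top n) \<rightarrow> {0..1}" using i by (auto simp: cube_def)
  qed
next
  fix V x y
  assume xy: "(x, y) \<in> path_circ (monotone_segments n) (topspace (cube_top n) \<inter> (\<lambda>t. t i) -` V)"
  define Q where "Q = topspace (cube_top n) \<inter> (\<lambda>t. t i) -` V"
  define Rel where "Rel = {(x, y). x i \<le> y i \<and> {x i..y i} \<subseteq> V}"
  have "trans Rel"
  proof (rule transI)
    fix a b c :: "nat \<Rightarrow> real" assume "(a, b) \<in> Rel" "(b, c) \<in> Rel"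
    moreover have "{a i..c i} \<subseteq> {a i..b i} \<union> {b i..c i}" by auto
    ultimately show "(a, c) \<in> Rel" unfolding Rel_def by auto
  qed
  moreover have "Id_on Q \<subseteq> Rel" unfolding Rel_def Q_def by auto
  moreover have "path_steps (monotone_segments n) Q \<subseteq> Rel"
  proof
    fix z assume "z \<in> path_steps (monotone_segments n) Q"
    then obtain u w where uw: "z = (u, w)" "\<forall>i<n. u i \<le> w i" "segment u w ` {0..1} \<subseteq> Q"
      unfolding path_steps_def monotone_segments_def by auto
    have "{u i..w i} \<subseteq> V"
    proof
      fix s assume "s \<in> {u i..w i}"
      then obtain r where r: "r \<in> {0..1}" "segment u w r i = s"
        using segment_covers_interval uw(2) i by blast
      then have "segment u w r \<in> Q" using uw(3) by blast
      then show "s \<in> V" using r(2) unfolding Q_def by auto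
    qed
    then show "z \<in> Rel" unfolding Rel_def uw(1) using uw(2) i by auto
  qed
  ultimately have "path_circ (monotone_segments n) Q \<subseteq> Rel" by (rule path_circ_le)
  then show "(x i, y i) \<in> {(x, y). x \<le> y \<and> {x..y} \<subseteq> V}"
    using xy unfolding Q_def[symmetric] Rel_def by auto
qed

lemma fst_boxn [simp]: "fst (boxn n) = cube_top n"
  unfolding boxn_def by simp

lemma snd_boxn:
  "openin (cube_top n) P \<Longrightarrow> snd (boxn n) P =
     \<Union>{C P | C. is_circulation (cube_top n) C \<and> (\<forall>i<n. stream_map (cube_top n, C) box1 (\<lambda>t. t i))}"
  unfolding boxn_def by simp

lemma boxn_contains_path_circ:
  assumes "openin (cube_top n) P"
  shows "path_circ (monotone_segments n) P \<subseteq> snd (boxn n) P"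
proof -
  have "path_circ (monotone_segments n) P \<in> {C P | C. is_circulation (cube_top n) C \<and>
          (\<forall>i<n. stream_map (cube_top n, C) box1 (\<lambda>t. t i))}"
    using cube_path_circulation projection_stream_map by blast
  then show ?thesis unfolding snd_boxn[OF assms] by (rule Union_upper)
qed

text \<open>Monotone segments are dipaths of the directed cube: the restriction of a monotone
  segment to [a,b] is again one, so its endpoints form a generating step.\<close>
lemma monotone_segment_dipath:
  assumes p: "p \<in> monotone_segments n"
  shows "stream_map box1 (boxn n) p"
  unfolding stream_map_box1_iff fst_boxn
proof (intro conjI allI impI)
  obtain u w where pe: "p = segment u w" "u \<in> cube n" "w \<in> cube n" "\<forall>i<n. u i \<le> w i"
    using p unfolding monotone_segments_def by blast
  show "continuous_map (top_of_set {0..1}) (cube_top n) p"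
    unfolding pe(1) using segment_continuous[OF pe(2,3)] .
  fix W a b
  assume "openin (cube_top n) W \<and> a \<le> b \<and> {a..b} \<subseteq> {0..1} \<inter> p -` W"
  then have W: "openin (cube_top n) W" and ab: "a \<le> b" "{a..b} \<subseteq> {0..1} \<inter> p -` W"
    by auto
  have a0: "0 \<le> a" and b1: "b \<le> 1" using ab by auto
  define p' where "p' = (\<lambda>r. p (a + r * (b - a)))"
  have "p' \<in> monotone_segments n"
    unfolding p'_def pe(1) using monotone_segment_restrict[OF pe(2-4) a0 ab(1) b1] .
  moreover have "p' ` {0..1} \<subseteq> W"
    unfolding p'_def using affine_param_in_interval[OF ab(1)] ab(2) by blast
  ultimately have "(p' 0, p' 1) \<in> path_circ (monotone_segments n) W"
    using path_steps_into_circ unfolding path_steps_def by blast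
  then show "(p a, p b) \<in> snd (boxn n) W"
    using boxn_contains_path_circ[OF W] unfolding p'_def by auto
qed

lemma admissible_circulation_monotone:
  assumes C: "is_circulation (cube_top n) C"
    and proj: "\<forall>i<n. stream_map (cube_top n, C) box1 (\<lambda>t. t i)"
    and B: "openin (cube_top n) B" and ab: "(a, b) \<in> C B" and i: "i < n"
  shows "a i \<le> b i"
proof -
  have cube_open: "openin (cube_top n) (cube n)" using openin_topspace[of "cube_top n"] by simp
  have "B \<subseteq> cube n" using openin_subset[OF B] by simp
  from circulation_mono[OF C cube_open B this] have "(a, b) \<in> C (cube n)" using ab by blast
  moreover have "cube n \<inter> (\<lambda>t. t i) -` {0..1} = cube n"
    using i by (auto simp: cube_def)
  ultimately have mem: "(a, b) \<in> snd (cube_top n, C) (topspace (fst (cube_top n, C)) \<inter> (\<lambda>t. t i) -` {0..1})"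
    by simp
  have opn: "openin (fst box1) {0..1}"
    using openin_topspace[of "top_of_set {0..1::real}"] by (simp add: box1_def)
  have sm: "stream_map (cube_top n, C) box1 (\<lambda>t. t i)" using proj i by blast
  from stream_map_relD[OF sm opn mem] show ?thesis unfolding box1_def by simp
qed

definition segment_convex :: "(nat \<Rightarrow> real) set \<Rightarrow> bool" where
  "segment_convex B \<longleftrightarrow> (\<forall>u\<in>B. \<forall>w\<in>B. \<forall>r. 0 \<le> r \<and> r \<le> 1 \<longrightarrow> segment u w r \<in> B)"

text \<open>The cube is locally segment-convex: basic open sets of the product topology, cut
  down to the cube, are products of intervals.\<close>
lemma segment_convex_neighbourhood:
  assumes P: "openin (cube_top n) P" and z: "z \<in> P"
  shows "\<exists>B. openin (cube_top n) B \<and> z \<in> B \<and> B \<subseteq> P \<and> segment_convex B"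
proof -
  obtain U where U: "openin (powertop_real UNIV) U" "P = U \<inter> cube n"
    using P unfolding cube_top_def openin_subtopology by blast
  have "z \<in> U" using z U(2) by blast
  from product_topology_open_contains_basis[OF U(1) this]
  obtain Xs where Xs: "z \<in> (\<Pi>\<^sub>E i\<in>UNIV. Xs i)" "\<forall>i. open (Xs i)" "finite {i. Xs i \<noteq> UNIV}"
      "(\<Pi>\<^sub>E i\<in>UNIV. Xs i) \<subseteq> U"
    by auto
  define F where "F = {i. Xs i \<noteq> UNIV}"
  have "\<exists>d>0. ball (z i) d \<subseteq> Xs i" for i
    using Xs(1,2) open_contains_ball_eq[of "Xs i" "z i"] by (auto simp: PiE_iff)
  then obtain d where d: "\<And>i. d i > 0" "\<And>i. ball (z i) (d i) \<subseteq> Xs i" by metis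
  define Ys where "Ys i = (if i \<in> F then ball (z i) (d i) else UNIV)" for i
  define B where "B = (\<Pi>\<^sub>E i\<in>UNIV. Ys i) \<inter> cube n"
  have "openin (powertop_real UNIV) (\<Pi>\<^sub>E i\<in>UNIV. Ys i)"
  proof (rule product_topology_basis)
    show "\<And>i. openin euclideanreal (Ys i)" unfolding Ys_def by auto
    have "{i. Ys i \<noteq> topspace euclideanreal} \<subseteq> F" unfolding Ys_def by auto
    then show "finite {i. Ys i \<noteq> topspace euclideanreal}"
      using Xs(3) finite_subset unfolding F_def by blast
  qed
  then have B_open: "openin (cube_top n) B"
    unfolding B_def cube_top_def openin_subtopology by blast
  have "Ys i \<subseteq> Xs i" for i using d(2)[of i] unfolding Ys_def F_def by auto
  then have "(\<Pi>\<^sub>E i\<in>UNIV. Ys i) \<subseteq> (\<Pi>\<^sub>E i\<in>UNIV. Xs i)" by (rule PiE_mono)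
  then have B_sub: "B \<subseteq> P" unfolding B_def U(2) using Xs(4) by blast
  have z_in: "z \<in> B" unfolding B_def Ys_def using z U(2) d(1) by auto
  have "segment_convex B"
    unfolding segment_convex_def
  proof (intro ballI allI impI)
    fix u w and r :: real assume uw: "u \<in> B" "w \<in> B" and r: "0 \<le> r \<and> r \<le> 1"
    have "segment u w r i \<in> Ys i" for i
      using convex_affine_param[of "Ys i" "u i" "w i" r] uw r
      unfolding B_def Ys_def segment_def by (auto simp: PiE_iff)
    moreover have "segment u w r \<in> cube n" using segment_in_cube uw r unfolding B_def by blast
    ultimately show "segment u w r \<in> B" unfolding B_def by (auto simp: PiE_iff)
  qed
  with B_open B_sub z_in show ?thesis by blast
qed

section \<open>The stream realization\<close>

lemma istopology_final:
  "istopology (\<lambda>U. U \<subseteq> Q \<and> openin CT {p \<in> topspace CT. f p \<in> U})"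
  unfolding istopology_def
proof (rule conjI; intro allI impI)
  fix S T assume S: "S \<subseteq> Q \<and> openin CT {p \<in> topspace CT. f p \<in> S}"
    and T: "T \<subseteq> Q \<and> openin CT {p \<in> topspace CT. f p \<in> T}"
  have "{p \<in> topspace CT. f p \<in> S \<inter> T} =
          {p \<in> topspace CT. f p \<in> S} \<inter> {p \<in> topspace CT. f p \<in> T}"
    by auto
  then show "S \<inter> T \<subseteq> Q \<and> openin CT {p \<in> topspace CT. f p \<in> S \<inter> T}"
    using S T by auto
next
  fix K assume K: "\<forall>S\<in>K. S \<subseteq> Q \<and> openin CT {p \<in> topspace CT. f p \<in> S}"
  have "{p \<in> topspace CT. f p \<in> \<Union>K} = (\<Union>S\<in>K. {p \<in> topspace CT. f p \<in> S})" by auto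
  then show "\<Union>K \<subseteq> Q \<and> openin CT {p \<in> topspace CT. f p \<in> \<Union>K}"
    using K by (auto intro!: openin_Union)
qed

lemma openin_real_top:
  "openin (real_top X act) U \<longleftrightarrow>
     U \<subseteq> topspace (cells_top X) // real_rel X act \<and>
     openin (cells_top X) {p \<in> topspace (cells_top X). real_rel X act `` {p} \<in> U}"
  unfolding real_top_def by (subst topology_inverse'[OF istopology_final]) (rule refl)

lemma class_in_topspace:
  assumes "p \<in> topspace (cells_top X)"
  shows "real_rel X act `` {p} \<in> topspace (real_top X act)"
proof -
  let ?Q = "topspace (cells_top X) // real_rel X act"
  have "{p \<in> topspace (cells_top X). real_rel X act `` {p} \<in> ?Q} = topspace (cells_top X)"
    by (auto intro: quotientI)
  then have "openin (real_top X act) ?Q" unfolding openin_real_top by simp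
  then have "?Q \<subseteq> topspace (real_top X act)" by (rule openin_subset)
  moreover have "real_rel X act `` {p} \<in> ?Q" using assms by (rule quotientI)
  ultimately show ?thesis by blast
qed

lemma topspace_cells_top: "((n, x), t) \<in> topspace (cells_top X) \<longleftrightarrow> x \<in> X n \<and> t \<in> cube n"
  unfolding cells_top_def by simp

lemma char_map_continuous:
  assumes x: "x \<in> X n"
  shows "continuous_map (cube_top n) (real_top X act) (char_map X act n x)"
  unfolding continuous_map_def
proof (intro conjI allI impI)
  show "char_map X act n x \<in> topspace (cube_top n) \<rightarrow> topspace (real_top X act)"
    unfolding char_map_def using x by (auto intro!: class_in_topspace simp: topspace_cells_top)
next
  fix U assume U: "openin (real_top X act) U"
  define A where "A = {p \<in> topspace (cells_top X). real_rel X act `` {p} \<in> U}"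
  have "openin (cells_top X) A" using U unfolding openin_real_top A_def by blast
  then have "openin (cube_top n) {y. ((n, x), y) \<in> A}"
    unfolding cells_top_def openin_sum_topology using x by auto
  moreover have "{y. ((n, x), y) \<in> A} = {t \<in> topspace (cube_top n). char_map X act n x t \<in> U}"
    unfolding A_def char_map_def using x by (auto simp: topspace_cells_top)
  ultimately show "openin (cube_top n) {t \<in> topspace (cube_top n). char_map X act n x t \<in> U}"
    by simp
qed

lemma char_map_preimage_open:
  assumes "x \<in> X n" "openin (real_top X act) V"
  shows "openin (cube_top n) (cube n \<inter> char_map X act n x -` V)"
proof -
  have "openin (cube_top n) {t \<in> topspace (cube_top n). char_map X act n x t \<in> V}"
    using openin_continuous_map_preimage[OF char_map_continuous[of x X n act, OF assms(1)] assms(2)] .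
  moreover have "{t \<in> topspace (cube_top n). char_map X act n x t \<in> V} = cube n \<inter> char_map X act n x -` V"
    by auto
  ultimately show ?thesis by simp
qed

definition cell_segments ::
    "(nat \<Rightarrow> 'a set) \<Rightarrow> (nat \<Rightarrow> nat \<Rightarrow> (bool list \<Rightarrow> bool list) \<Rightarrow> 'a \<Rightarrow> 'a) \<Rightarrow>
     (real \<Rightarrow> ((nat \<times> 'a) \<times> (nat \<Rightarrow> real)) set) set" where
  "cell_segments X act = {char_map X act n x \<circ> p | n x p. x \<in> X n \<and> p \<in> monotone_segments n}"

lemma cell_segments_continuous:
  assumes "q \<in> cell_segments X act"
  shows "continuous_map (top_of_set {0..1}) (real_top X act) q"
proof -
  obtain n x u w where q: "q = char_map X act n x \<circ> segment u w" "x \<in> X n" "u \<in> cube n" "w \<in> cube n"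
    using assms unfolding cell_segments_def monotone_segments_def by blast
  show ?thesis unfolding q(1)
    using continuous_map_compose[OF segment_continuous[OF q(3,4)] char_map_continuous[of x X n act, OF q(2)]] .
qed

lemma cell_segments_restriction_closed: "restriction_closed (cell_segments X act)"
  unfolding restriction_closed_def
proof (intro ballI allI impI)
  fix q and a b :: real assume "q \<in> cell_segments X act" and ab: "0 \<le> a \<and> a \<le> b \<and> b \<le> 1"
  then obtain n x u w where q: "q = char_map X act n x \<circ> segment u w" "x \<in> X n"
      "u \<in> cube n" "w \<in> cube n" "\<forall>i<n. u i \<le> w i"
    unfolding cell_segments_def monotone_segments_def by blast
  have "(\<lambda>r. segment u w (a + r * (b - a))) \<in> monotone_segments n"
    using monotone_segment_restrict[OF q(3-5)] ab by blast
  moreover have "(\<lambda>r. q (a + r * (b - a))) = char_map X act n x \<circ> (\<lambda>r. segment u w (a + r * (b - a)))"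
    unfolding q(1) by auto
  ultimately show "(\<lambda>r. q (a + r * (b - a))) \<in> cell_segments X act"
    unfolding cell_segments_def using q(2) by blast
qed

lemma realization_path_circulation:
  "is_circulation (real_top X act) (path_circ (cell_segments X act))"
  using path_circ_is_circulation[OF cell_segments_continuous cell_segments_restriction_closed] .

text \<open>Local step: on a segment-convex open set B inside the preimage of V, an admissible
  circulation of the cube relates only points joined by a monotone segment in B, whose image
  under the characteristic map is a cell segment inside V.\<close>
lemma admissible_step_on_convex:
  assumes x: "x \<in> X n"
    and C: "is_circulation (cube_top n) C" "\<forall>i<n. stream_map (cube_top n, C) box1 (\<lambda>t. t i)"
    and B: "openin (cube_top n) B" "segment_convex B" "B \<subseteq> char_map X act n x -` V"
    and ab: "(a, b) \<in> C B"
  shows "(char_map X act n x a, char_map X act n x b) \<in> path_steps (cell_segments X act) V"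
proof -
  let ?q = "char_map X act n x \<circ> segment a b"
  have "a \<in> B" "b \<in> B" using circulation_preorder(1)[OF C(1) B(1)] ab by auto
  moreover have "B \<subseteq> cube n" using openin_subset[OF B(1)] by simp
  moreover have "\<forall>i<n. a i \<le> b i" using admissible_circulation_monotone[OF C B(1) ab] by blast
  ultimately have "segment a b \<in> monotone_segments n" unfolding monotone_segments_def by blast
  then have "?q \<in> cell_segments X act" unfolding cell_segments_def using x by blast
  moreover have "segment a b ` {0..1} \<subseteq> B"
    using B(2) \<open>a \<in> B\<close> \<open>b \<in> B\<close> unfolding segment_convex_def by auto
  then have "?q ` {0..1} \<subseteq> V" using B(3) by auto
  ultimately have "(?q 0, ?q 1) \<in> path_steps (cell_segments X act) V"
    unfolding path_steps_def by blast
  then show ?thesis by simp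
qed

text \<open>Given a related pair (s,t) of the directed cube, choose an admissible
  circulation C relating them; on each segment-convex open set C only relates coordinatewise
  ordered points, whose segment is a cell segment; locality extends this to the whole
  preimage of V.\<close>
lemma char_map_stream_map:
  assumes x: "x \<in> X n"
  shows "stream_map (boxn n) (real_top X act, path_circ (cell_segments X act)) (char_map X act n x)"
proof -
  let ?ch = "char_map X act n x" and ?S = "cell_segments X act"
  have "(?ch s, ?ch t) \<in> path_circ ?S V"
    if V: "openin (real_top X act) V" and st: "(s, t) \<in> snd (boxn n) (cube n \<inter> ?ch -` V)" for V s t
  proof -
    define P where "P = cube n \<inter> ?ch -` V"
    have P_open: "openin (cube_top n) P"
      unfolding P_def using char_map_preimage_open[OF x V] .
    obtain C where C: "is_circulation (cube_top n) C"
        "\<forall>i<n. stream_map (cube_top n, C) box1 (\<lambda>t. t i)" "(s, t) \<in> C P"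
      using st unfolding snd_boxn[OF P_open[unfolded P_def]] P_def by blast
    define Os where "Os = {B. openin (cube_top n) B \<and> B \<subseteq> P \<and> segment_convex B}"
    define Rel where "Rel = {(a, b). (?ch a, ?ch b) \<in> path_circ ?S V}"
    have "C P \<subseteq> Rel"
    proof (rule circulation_local_bound[OF C(1)])
      show "\<forall>B\<in>Os. openin (cube_top n) B" unfolding Os_def by blast
      show "\<Union>Os = P"
        using segment_convex_neighbourhood[OF P_open] unfolding Os_def by blast
      show "trans Rel"
        using path_circ_trans[of ?S V] unfolding Rel_def by (auto intro: transI dest: transD)
      show "Id_on P \<subseteq> Rel" unfolding Rel_def P_def using path_circ_refl by auto
    next
      fix B assume "B \<in> Os"
      then have B: "openin (cube_top n) B" "segment_convex B" "B \<subseteq> ?ch -` V"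
        unfolding Os_def P_def by auto
      show "C B \<subseteq> Rel"
        using admissible_step_on_convex[OF x C(1,2) B] path_steps_into_circ
        unfolding Rel_def by blast
    qed
    then show ?thesis using C(3) unfolding Rel_def by blast
  qed
  then show ?thesis
    unfolding stream_map_def using char_map_continuous[of x X n act, OF x] by simp
qed

lemma snd_stream_realization:
  "openin (real_top X act) V \<Longrightarrow> snd (stream_realization X act) V =
     \<Inter>{C V | C. is_circulation (real_top X act) C \<and>
        (\<forall>n x. x \<in> X n \<longrightarrow> stream_map (boxn n) (real_top X act, C) (char_map X act n x))}"
  unfolding stream_realization_def by simp

lemma fst_stream_realization [simp]: "fst (stream_realization X act) = real_top X act"
  unfolding stream_realization_def by simp

text \<open>The circulation of the realization lies below the one generated by cell segments,
  being the smallest circulation making all characteristic maps stream maps.\<close>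
lemma realization_circ_le:
  assumes "openin (real_top X act) V"
  shows "snd (stream_realization X act) V \<subseteq> path_circ (cell_segments X act) V"
proof -
  have "path_circ (cell_segments X act) V \<in> {C V | C. is_circulation (real_top X act) C \<and>
        (\<forall>n x. x \<in> X n \<longrightarrow> stream_map (boxn n) (real_top X act, C) (char_map X act n x))}"
    using realization_path_circulation char_map_stream_map
    by (intro CollectI exI[of _ "path_circ (cell_segments X act)"] conjI refl allI impI)
  then show ?thesis unfolding snd_stream_realization[OF assms] by (rule Inter_lower)
qed

lemma realization_circ_refl:
  "openin (real_top X act) W \<Longrightarrow> w \<in> W \<Longrightarrow> (w, w) \<in> snd (stream_realization X act) W"
  unfolding snd_stream_realization by (rule Inter_circulations_refl) auto

lemma realization_circ_trans:
  "openin (real_top X act) W \<Longrightarrow> trans (snd (stream_realization X act) W)"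
  unfolding snd_stream_realization by (rule Inter_circulations_trans) auto

text \<open>Characteristic maps are stream maps into the realization: every admissible
  circulation transports the relations of the directed cube.\<close>
lemma char_map_realization_stream_map:
  assumes x: "x \<in> X n"
  shows "stream_map (boxn n) (stream_realization X act) (char_map X act n x)"
  unfolding stream_map_def fst_stream_realization
proof (intro conjI allI impI)
  let ?ch = "char_map X act n x"
  show "continuous_map (fst (boxn n)) (real_top X act) ?ch"
    using char_map_continuous[of x X n act, OF x] by simp
  fix V s t
  assume V: "openin (real_top X act) V"
    and st: "(s, t) \<in> snd (boxn n) (topspace (fst (boxn n)) \<inter> ?ch -` V)"
  show "(?ch s, ?ch t) \<in> snd (stream_realization X act) V"
    unfolding snd_stream_realization[OF V]
  proof (rule InterI)
    fix Z assume "Z \<in> {C V | C. is_circulation (real_top X act) C \<and>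
        (\<forall>n x. x \<in> X n \<longrightarrow> stream_map (boxn n) (real_top X act, C) (char_map X act n x))}"
    then obtain C where C: "Z = C V" "stream_map (boxn n) (real_top X act, C) ?ch"
      using x by blast
    show "(?ch s, ?ch t) \<in> Z" using stream_map_relD[OF C(2), of V] V st C(1) by simp
  qed
qed

lemma cell_segment_dipath:
  assumes q: "q \<in> cell_segments X act"
  shows "stream_map box1 (stream_realization X act) q"
proof -
  obtain n x p where qe: "q = char_map X act n x \<circ> p" "x \<in> X n" "p \<in> monotone_segments n"
    using q unfolding cell_segments_def by blast
  show ?thesis unfolding qe(1)
    by (rule stream_map_compose[OF monotone_segment_dipath[OF qe(3)]
          char_map_realization_stream_map[of x X n act, OF qe(2)]])
qed

theorem mainTheorem9:
  fixes X :: "nat \<Rightarrow> 'a set"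
    and act :: "nat \<Rightarrow> nat \<Rightarrow> (bool list \<Rightarrow> bool list) \<Rightarrow> 'a \<Rightarrow> 'a"
  assumes "precubical X act"
  shows "path_ordered (stream_realization X act)"
proof -
  let ?T = "real_top X act" and ?R = "snd (stream_realization X act)"
  have S: "stream_realization X act = (?T, ?R)" by (simp add: prod_eq_iff)
  have "dipath_joins (stream_realization X act) x y V"
    if V: "openin ?T V" and xy: "(x, y) \<in> ?R V" for V x y
  proof (subst S, rule path_circ_dipath_joins[OF _ _ _ V])
    show "(x, y) \<in> path_circ (cell_segments X act) V" using realization_circ_le[OF V] xy by blast
    show "stream_map box1 (?T, ?R) q" if "q \<in> cell_segments X act" for q
      by (subst S[symmetric]) (rule cell_segment_dipath[OF that])
  qed (use realization_circ_refl realization_circ_trans in auto)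
  then show ?thesis unfolding path_ordered_iff fst_stream_realization by blast
qed

end
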